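(* Let $(\xi,\eta)\in\mathbb{R}^2$ be such that $1,\xi,\eta$ are linearly independent over $\mathbb{Q}$, $f(\xi,\eta)=0$ for some irreducible $f\in\mathbb{Q}[x,y]$ of degree $2$ with $f\notin\mathbb{Q}[x]$, and there is $\lambda>1/2$ such that for every sufficiently large $X\ge1$ the system $|x_0|\le X$, $|x_0\xi-x_1|\le X^{-\lambda}$, $|x_0\eta-x_2|\le X^{-\lambda}$ has a non-zero solution in $\mathbb{Z}^3$. Let $X_1<X_2<\cdots$ be as in the context. Then there is a constant $c>0$ independent of $i$ such that $X_{i+1}^{\lambda}\le c\,X_i$ for each $i\ge1$.
   Context: For $\mathbf{x}=(x_0,x_1,x_2)\in\mathbb{Z}^3$ put $\delta(\mathbf{x})=\max\{|x_0\xi-x_1|,|x_0\eta-x_2|\}$. For $X\ge1$, $\Delta(X)$ is the minimum of $\delta(\mathbf{x})$ over all $\mathbf{x}\in\mathbb{Z}^3$ with $1\le x_0\le X$; $\Delta$ is non-increasing, tends to $0$ and is constant between consecutive integers. Let $X_1=1<X_2<X_3<\cdots$ be the number $1$ together with the points of discontinuity of $\Delta$, listed in increasing order. *)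

theory Defs
  imports "HOL-Analysis.Analysis" "HOL-Computational_Algebra.Polynomial_Factorial"
begin

text \<open>Bivariate polynomials over Q are represented as rat poly poly:
  the outer variable is y, the inner variable (of the coefficients) is x.\<close>

definition total_degree :: "rat poly poly \<Rightarrow> nat" where
  "total_degree f = Max ({0} \<union> {i + degree (coeff f i) | i. coeff f i \<noteq> 0})"

definition eval2 :: "rat poly poly \<Rightarrow> real \<Rightarrow> real \<Rightarrow> real" where
  "eval2 f xi eta = poly (map_poly (\<lambda>c. poly (map_poly of_rat c) xi) f) eta"

definition in_Qx :: "rat poly poly \<Rightarrow> bool" where
  "in_Qx f \<longleftrightarrow> degree f = 0"

definition lin_indep_1 :: "real \<Rightarrow> real \<Rightarrow> bool" where
  "lin_indep_1 xi eta \<longleftrightarrow>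
     (\<forall>a b c :: rat. of_rat a + of_rat b * xi + of_rat c * eta = 0 \<longrightarrow> a = 0 \<and> b = 0 \<and> c = 0)"

definition delta3 :: "real \<Rightarrow> real \<Rightarrow> int \<Rightarrow> int \<Rightarrow> int \<Rightarrow> real" where
  "delta3 xi eta x0 x1 x2 = max \<bar>of_int x0 * xi - of_int x1\<bar> \<bar>of_int x0 * eta - of_int x2\<bar>"

definition Delta :: "real \<Rightarrow> real \<Rightarrow> real \<Rightarrow> real" where
  "Delta xi eta X = Inf {delta3 xi eta x0 x1 x2 | x0 x1 x2. 1 \<le> x0 \<and> of_int x0 \<le> X}"

text \<open>The set {X_1, X_2, ...}: the number 1 together with the points of discontinuity of Delta
  (on its domain X \<ge> 1).\<close>
definition Xset :: "real \<Rightarrow> real \<Rightarrow> real set" where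
  "Xset xi eta = {1} \<union> {X. 1 < X \<and> \<not> isCont (Delta xi eta) X}"

end

theory Submission
  imports Defs
begin

text \<open>By hypothesis \<open>\<Delta>(X) \<le> X\<^sup>-\<^sup>\<lambda>\<close> for large \<open>X\<close>; since \<open>\<Delta>\<close> is constant on \<open>[X\<^sub>i, X\<^sub>i\<^sub>+\<^sub>1)\<close>,
  this gives \<open>X\<^sub>i\<^sub>+\<^sub>1\<^sup>\<lambda> \<Delta>(X\<^sub>i) \<le> 2\<^sup>\<lambda>\<close>, and it remains to show \<open>\<Delta>(m) \<ge> 1/(C m)\<close> at every jump \<open>m\<close>
  of \<open>\<Delta>\<close>. Clearing denominators in \<open>f\<close> gives a ternary integral quadratic form \<open>q\<close> with
  \<open>q(1, \<xi>, \<eta>) = 0\<close>. Let \<open>x = (m, x\<^sub>1, x\<^sub>2)\<close> realise \<open>\<Delta>(m)\<close>. If \<open>q(x) \<noteq> 0\<close>, then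
  \<open>1 \<le> |q(x)| = O(m \<Delta>(m))\<close>. If \<open>q(x) = 0\<close>, let \<open>w\<close> realise \<open>\<Delta>(m - 1)\<close>: then \<open>x\<close> is
  primitive and independent of \<open>w\<close>, and the plane they span has area \<open>O(m \<Delta>(m - 1)) = O(m\<^sup>1\<^sup>-\<^sup>\<lambda>)\<close>.
  Since \<open>1, \<xi>, \<eta>\<close> are linearly independent, \<open>q\<close> does not vanish on that plane, and a primitive
  zero of \<open>q\<close> in a lattice plane of area \<open>A\<close> has height \<open>O(A\<^sup>2)\<close>; so \<open>m = O(m\<^sup>2\<^sup>-\<^sup>2\<^sup>\<lambda>)\<close>, which is
  impossible for \<open>\<lambda> > 1/2\<close> and large \<open>m\<close>.\<close>

section \<open>Vectors in \<open>\<int>\<^sup>3\<close> and \<open>\<real>\<^sup>3\<close>\<close>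

type_synonym 'a vec3 = "'a \<times> 'a \<times> 'a"

fun dot3 :: "'a::comm_ring_1 vec3 \<Rightarrow> 'a vec3 \<Rightarrow> 'a" where
  "dot3 (a0, a1, a2) (b0, b1, b2) = a0 * b0 + a1 * b1 + a2 * b2"

fun cross_prod3 :: "'a::comm_ring_1 vec3 \<Rightarrow> 'a vec3 \<Rightarrow> 'a vec3" where
  "cross_prod3 (a0, a1, a2) (b0, b1, b2) = (a1 * b2 - a2 * b1, a2 * b0 - a0 * b2, a0 * b1 - a1 * b0)"

abbreviation area_sq :: "'a::comm_ring_1 vec3 \<Rightarrow> 'a vec3 \<Rightarrow> 'a" where
  "area_sq u v \<equiv> dot3 (cross_prod3 u v) (cross_prod3 u v)"

fun add3 :: "'a::comm_ring_1 vec3 \<Rightarrow> 'a vec3 \<Rightarrow> 'a vec3" where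
  "add3 (a0, a1, a2) (b0, b1, b2) = (a0 + b0, a1 + b1, a2 + b2)"

fun scale3 :: "'a::comm_ring_1 \<Rightarrow> 'a vec3 \<Rightarrow> 'a vec3" where
  "scale3 k (a0, a1, a2) = (k * a0, k * a1, k * a2)"

fun of_int3 :: "int vec3 \<Rightarrow> real vec3" where
  "of_int3 (a0, a1, a2) = (of_int a0, of_int a1, of_int a2)"

fun supnorm3 :: "'a::linordered_idom vec3 \<Rightarrow> 'a" where
  "supnorm3 (a0, a1, a2) = max \<bar>a0\<bar> (max \<bar>a1\<bar> \<bar>a2\<bar>)"

lemma dot3_commute: "dot3 u v = dot3 v u"
  by (cases u; cases v) (simp add: mult.commute)

lemma area_sq_lagrange: "area_sq u v = dot3 u u * dot3 v v - (dot3 u v)\<^sup>2"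
  by (cases u; cases v) (simp add: algebra_simps power2_eq_square)

lemma area_sq_commute: "area_sq v u = area_sq u v"
  by (cases u; cases v) (simp add: algebra_simps)

lemma dot3_self_nonneg: "0 \<le> dot3 u u" for u :: "'a::linordered_idom vec3"
  by (cases u) simp

lemma dot3_self_pos: "u \<noteq> (0, 0, 0) \<Longrightarrow> 0 < dot3 u u" for u :: "'a::linordered_idom vec3"
  by (cases u) (auto simp: add_pos_nonneg add_nonneg_pos simp flip: power2_eq_square)

lemma scale3_dot3_cross_prod3_decomp:
  "scale3 (area_sq u v) z =
     add3 (add3 (scale3 (dot3 z (cross_prod3 v (cross_prod3 u v))) u) (scale3 (dot3 z (cross_prod3 (cross_prod3 u v) u)) v))
       (scale3 (dot3 (cross_prod3 u v) z) (cross_prod3 u v))"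
  by (cases u; cases v; cases z) (simp add: algebra_simps)

lemma of_int3_cross_prod3: "of_int3 (cross_prod3 u v) = cross_prod3 (of_int3 u) (of_int3 v)"
  by (cases u; cases v) simp

lemma of_int3_add3: "of_int3 (add3 u v) = add3 (of_int3 u) (of_int3 v)"
  by (cases u; cases v) simp

lemma of_int3_scale3: "of_int3 (scale3 k v) = scale3 (of_int k) (of_int3 v)"
  by (cases v) simp

lemma of_int_dot3: "of_int (dot3 u v) = dot3 (of_int3 u) (of_int3 v)"
  by (cases u; cases v) simp

lemma supnorm3_nonneg: "0 \<le> supnorm3 u"
  by (cases u) simp

lemma supnorm3_sq_le_dot3: "(supnorm3 u)\<^sup>2 \<le> dot3 u u" for u :: "'a::linordered_idom vec3"
  by (cases u) (simp add: power2_eq_square max_def)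

lemma dot3_le_supnorm3_sq: "dot3 u u \<le> 3 * (supnorm3 u)\<^sup>2" for u :: "'a::linordered_idom vec3"
proof (cases u)
  case (fields a0 a1 a2)
  have sq: "a * a \<le> (supnorm3 u)\<^sup>2" if "\<bar>a\<bar> \<le> supnorm3 u" for a
    using that abs_le_square_iff[of a "supnorm3 u"] by (simp add: power2_eq_square)
  have "a0 * a0 + a1 * a1 + a2 * a2 \<le> (supnorm3 u)\<^sup>2 + (supnorm3 u)\<^sup>2 + (supnorm3 u)\<^sup>2"
  proof -
    have "\<bar>a0\<bar> \<le> supnorm3 u" "\<bar>a1\<bar> \<le> supnorm3 u" "\<bar>a2\<bar> \<le> supnorm3 u"
      using fields by auto
    then show ?thesis by (intro add_mono sq)
  qed
  then show ?thesis using fields by simp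
qed

lemma supnorm3_ge_one: "u \<noteq> (0, 0, 0) \<Longrightarrow> 1 \<le> supnorm3 u" for u :: "int vec3"
  by (cases u) auto

lemma supnorm3_add3_le: "supnorm3 (add3 u v) \<le> supnorm3 u + supnorm3 v"
  for u :: "'a::linordered_idom vec3"
proof (cases u; cases v)
  fix a0 a1 a2 b0 b1 b2 assume uv: "u = (a0, a1, a2)" "v = (b0, b1, b2)"
  have "\<bar>x + y\<bar> \<le> supnorm3 u + supnorm3 v" if "\<bar>x\<bar> \<le> supnorm3 u" "\<bar>y\<bar> \<le> supnorm3 v" for x y
    using that abs_triangle_ineq[of x y] by simp
  then show ?thesis using uv by simp
qed

lemma supnorm3_scale3: "supnorm3 (scale3 k u) = \<bar>k\<bar> * supnorm3 u" for u :: "'a::linordered_idom vec3"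
  by (cases u) (simp add: abs_mult max_mult_distrib_left)

lemma abs_mult_le_mult:
  "\<bar>x\<bar> \<le> P \<Longrightarrow> \<bar>y\<bar> \<le> R \<Longrightarrow> \<bar>c * x * y\<bar> \<le> \<bar>c\<bar> * (P * R)" for x :: "'a::linordered_idom"
  by (simp add: abs_mult mult.assoc mult_left_mono mult_mono')

lemma supnorm3_cross_prod3_le:
  "supnorm3 (cross_prod3 u v) \<le> 2 * supnorm3 u * supnorm3 v" for u :: "'a::linordered_idom vec3"
proof (cases u; cases v)
  fix a0 a1 a2 b0 b1 b2 assume uv: "u = (a0, a1, a2)" "v = (b0, b1, b2)"
  have "\<bar>x * y - x' * y'\<bar> \<le> 2 * supnorm3 u * supnorm3 v"
    if "\<bar>x\<bar> \<le> supnorm3 u" "\<bar>x'\<bar> \<le> supnorm3 u" "\<bar>y\<bar> \<le> supnorm3 v" "\<bar>y'\<bar> \<le> supnorm3 v"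
    for x x' y y'
    using abs_mult_le_mult[OF that(1,3), of 1] abs_mult_le_mult[OF that(2,4), of 1]
      abs_triangle_ineq4[of "x * y" "x' * y'"] by simp
  then show ?thesis using uv by simp
qed

section \<open>Lagrange--Gauss reduction of lattice planes\<close>

definition int_span2 :: "int vec3 \<Rightarrow> int vec3 \<Rightarrow> int vec3 \<Rightarrow> bool" where
  "int_span2 x u v \<longleftrightarrow> (\<exists>a b. x = add3 (scale3 a u) (scale3 b v))"

lemma int_span2_commute: "int_span2 x u v \<Longrightarrow> int_span2 x v u"
  unfolding int_span2_def by (metis add3.simps add.commute prod_cases3 scale3.simps)

text \<open>Lagrange--Gauss reduction: replacing \<open>v\<close> by \<open>v \<mp> u\<close> keeps the lattice and
  the covolume \<open>|u \<times> v|\<close> and decreases \<open>|u|\<^sup>2 + |v|\<^sup>2\<close> as long as \<open>2 |u \<bullet> v| > |u|\<^sup>2\<close>.\<close>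

lemma gauss_reduction:
  fixes u v x :: "int vec3"
  assumes "dot3 u u \<le> dot3 v v" and "int_span2 x u v"
  shows "\<exists>u' v'. int_span2 x u' v' \<and> area_sq u' v' = area_sq u v \<and>
    dot3 u' u' \<le> dot3 v' v' \<and> 2 * \<bar>dot3 u' v'\<bar> \<le> dot3 u' u'"
  using assms
proof (induction "nat (dot3 u u + dot3 v v)" arbitrary: u v rule: less_induct)
  case less
  show ?case
  proof (cases "2 * \<bar>dot3 u v\<bar> \<le> dot3 u u")
    case True
    then show ?thesis using less.prems by blast
  next
    case False
    define s where "s = sgn (dot3 u v)"
    define v1 where "v1 = add3 v (scale3 (- s) u)"
    have s: "s * dot3 u v = \<bar>dot3 u v\<bar>" "s * s = 1"
      using False dot3_self_nonneg[of u] by (auto simp: s_def sgn_if)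
    have norm_v1: "dot3 v1 v1 = dot3 v v - 2 * \<bar>dot3 u v\<bar> + dot3 u u"
      using s unfolding v1_def by (cases u; cases v) (simp add: algebra_simps power2_eq_square)
    have cross_v1: "cross_prod3 u v1 = cross_prod3 u v"
      unfolding v1_def by (cases u; cases v) (simp add: algebra_simps)
    have span: "int_span2 x u v1"
    proof -
      obtain a b where "x = add3 (scale3 a u) (scale3 b v)"
        using less.prems(2) int_span2_def by auto
      then have "x = add3 (scale3 (a + b * s) u) (scale3 b v1)"
        unfolding v1_def by (cases u; cases v) (simp add: algebra_simps)
      then show ?thesis unfolding int_span2_def by blast
    qed
    have smaller: "nat (dot3 u u + dot3 v1 v1) < nat (dot3 u u + dot3 v v)"
      using norm_v1 False dot3_self_nonneg[of u] dot3_self_nonneg[of v1] by simp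
    show ?thesis
    proof (cases "dot3 u u \<le> dot3 v1 v1")
      case True
      then show ?thesis using less.hyps[OF smaller True span] cross_v1 by simp
    next
      case False
      have "nat (dot3 v1 v1 + dot3 u u) < nat (dot3 u u + dot3 v v)" using smaller by simp
      from less.hyps[OF this _ int_span2_commute[OF span]] False show ?thesis
        using cross_v1 area_sq_commute[of u v1] by simp
    qed
  qed
qed

lemma reduced_basis:
  fixes x w :: "int vec3"
  shows "\<exists>u v. int_span2 x u v \<and> area_sq u v = area_sq x w \<and>
     3 * (dot3 u u * dot3 v v) \<le> 4 * area_sq x w"
proof -
  have "int_span2 x x w"
    unfolding int_span2_def by (intro exI[of _ 1] exI[of _ 0]) (cases x; cases w; simp)
  moreover from this have "int_span2 x w x" by (rule int_span2_commute)
  ultimately obtain u v where uv: "int_span2 x u v"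
      "area_sq u v = area_sq x w"
      "dot3 u u \<le> dot3 v v" "2 * \<bar>dot3 u v\<bar> \<le> dot3 u u"
    using gauss_reduction[of x w x] gauss_reduction[of w x x] area_sq_commute[of w x]
    by (metis linear)
  have "(2 * \<bar>dot3 u v\<bar>)\<^sup>2 \<le> (dot3 u u)\<^sup>2" using uv(4) by (intro power_mono) auto
  moreover have "(dot3 u u)\<^sup>2 \<le> dot3 u u * dot3 v v"
    using uv(3) dot3_self_nonneg[of u] by (simp add: power2_eq_square mult_left_mono)
  ultimately have "3 * (dot3 u u * dot3 v v) \<le> 4 * area_sq u v"
    unfolding area_sq_lagrange by (simp add: power_mult_distrib)
  then show ?thesis using uv(1,2) by (metis (no_types))
qed

section \<open>Ternary quadratic forms\<close>

type_synonym 'a qcoeffs = "'a \<times> 'a \<times> 'a \<times> 'a \<times> 'a \<times> 'a"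

fun qform :: "'a::comm_ring_1 qcoeffs \<Rightarrow> 'a vec3 \<Rightarrow> 'a" where
  "qform (p00, p01, p02, p11, p12, p22) (z0, z1, z2) =
     p00 * z0 * z0 + p01 * z0 * z1 + p02 * z0 * z2 + p11 * z1 * z1 + p12 * z1 * z2 + p22 * z2 * z2"

fun qform_polar :: "'a::comm_ring_1 qcoeffs \<Rightarrow> 'a vec3 \<Rightarrow> 'a vec3 \<Rightarrow> 'a" where
  "qform_polar (p00, p01, p02, p11, p12, p22) (u0, u1, u2) (v0, v1, v2) =
     2 * p00 * u0 * v0 + p01 * (u0 * v1 + u1 * v0) + p02 * (u0 * v2 + u2 * v0) + 2 * p11 * u1 * v1
     + p12 * (u1 * v2 + u2 * v1) + 2 * p22 * u2 * v2"

fun of_int6 :: "int qcoeffs \<Rightarrow> real qcoeffs" where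
  "of_int6 (a, b, c, d, e, f) = (of_int a, of_int b, of_int c, of_int d, of_int e, of_int f)"

fun qheight :: "'a::linordered_idom qcoeffs \<Rightarrow> 'a" where
  "qheight (a, b, c, d, e, f) = \<bar>a\<bar> + \<bar>b\<bar> + \<bar>c\<bar> + \<bar>d\<bar> + \<bar>e\<bar> + \<bar>f\<bar>"

lemma qform_add3_scale3:
  "qform p (add3 (scale3 a u) (scale3 b v)) = a\<^sup>2 * qform p u + a * b * qform_polar p u v + b\<^sup>2 * qform p v"
  by (cases p; cases u; cases v) (simp add: algebra_simps power2_eq_square)

lemma qform_add3_scale3_3:
  "qform p (add3 (add3 (scale3 a u) (scale3 b v)) (scale3 c w)) =
     a\<^sup>2 * qform p u + b\<^sup>2 * qform p v + c\<^sup>2 * qform p w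
     + a * b * qform_polar p u v + a * c * qform_polar p u w + b * c * qform_polar p v w"
  by (cases p; cases u; cases v; cases w) (simp add: algebra_simps power2_eq_square)

lemma qform_scale3: "qform p (scale3 k z) = k\<^sup>2 * qform p z"
  by (cases p; cases z) (simp add: algebra_simps power2_eq_square)

lemma of_int_qform: "of_int (qform p z) = qform (of_int6 p) (of_int3 z)"
  by (cases p; cases z) simp

lemma of_int_qform_polar: "of_int (qform_polar p u v) = qform_polar (of_int6 p) (of_int3 u) (of_int3 v)"
  by (cases p; cases u; cases v) simp

lemma of_int_qheight: "of_int (qheight p) = qheight (of_int6 p)"
  by (cases p) simp

lemma qheight_nonneg: "0 \<le> qheight p"
  by (cases p) simp

lemma abs_qform_le: "\<bar>qform p u\<bar> \<le> qheight p * (supnorm3 u)\<^sup>2"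
  for p :: "'a::linordered_idom qcoeffs"
proof (cases p; cases u)
  fix a b c d e f u0 u1 u2 assume pu: "p = (a, b, c, d, e, f)" "u = (u0, u1, u2)"
  let ?h = "supnorm3 u"
  have h: "\<bar>u0\<bar> \<le> ?h" "\<bar>u1\<bar> \<le> ?h" "\<bar>u2\<bar> \<le> ?h" using pu by auto
  note t = abs_mult_le_mult[OF h(1) h(1), of a] abs_mult_le_mult[OF h(1) h(2), of b]
    abs_mult_le_mult[OF h(1) h(3), of c] abs_mult_le_mult[OF h(2) h(2), of d]
    abs_mult_le_mult[OF h(2) h(3), of e] abs_mult_le_mult[OF h(3) h(3), of f]
  show ?thesis using t unfolding pu by (simp add: algebra_simps abs_le_iff power2_eq_square)
qed

lemma abs_qform_polar_le: "\<bar>qform_polar p u v\<bar> \<le> 2 * qheight p * supnorm3 u * supnorm3 v"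
  for p :: "'a::linordered_idom qcoeffs"
proof (cases p; cases u; cases v)
  fix a b c d e f u0 u1 u2 v0 v1 v2
  assume puv: "p = (a, b, c, d, e, f)" "u = (u0, u1, u2)" "v = (v0, v1, v2)"
  let ?h = "supnorm3 u" and ?k = "supnorm3 v"
  have h: "\<bar>u0\<bar> \<le> ?h" "\<bar>u1\<bar> \<le> ?h" "\<bar>u2\<bar> \<le> ?h" "\<bar>v0\<bar> \<le> ?k" "\<bar>v1\<bar> \<le> ?k" "\<bar>v2\<bar> \<le> ?k"
    using puv by auto
  note t = abs_mult_le_mult[OF h(1) h(4), of a] abs_mult_le_mult[OF h(1) h(5), of b]
    abs_mult_le_mult[OF h(2) h(4), of b] abs_mult_le_mult[OF h(1) h(6), of c]
    abs_mult_le_mult[OF h(3) h(4), of c] abs_mult_le_mult[OF h(2) h(5), of d]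
    abs_mult_le_mult[OF h(2) h(6), of e] abs_mult_le_mult[OF h(3) h(5), of e]
    abs_mult_le_mult[OF h(3) h(6), of f]
  show ?thesis using t unfolding puv by (simp add: algebra_simps abs_le_iff)
qed

lemma qform_eq_zero_imp_coeffs_zero:
  assumes "\<And>z. qform p z = 0"
  shows "p = (0, 0, 0, 0, 0, 0)"
proof (cases p)
  case (fields a b c d e f)
  have "a = 0" "d = 0" "f = 0"
    using assms[of "(1, 0, 0)"] assms[of "(0, 1, 0)"] assms[of "(0, 0, 1)"] fields by simp_all
  moreover have "b = 0" "c = 0" "e = 0"
    using assms[of "(1, 1, 0)"] assms[of "(1, 0, 1)"] assms[of "(0, 1, 1)"] fields calculation
    by simp_all
  ultimately show ?thesis using fields by simp
qed

lemma lin_indep_1_dot3_eq_zero: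
  assumes "lin_indep_1 xi eta" and "dot3 (of_int3 n) (1, xi, eta) = 0"
  shows "n = (0, 0, 0)"
proof (cases n)
  case (fields a b c)
  then have "of_rat (of_int a) + of_rat (of_int b) * xi + of_rat (of_int c) * eta = 0"
    using assms(2) by (simp add: ac_simps)
  then show ?thesis using assms(1) fields unfolding lin_indep_1_def by fastforce
qed

text \<open>If \<open>q\<close> vanished on the plane spanned by \<open>u\<close> and \<open>v\<close>, writing \<open>z\<close> in the
  basis \<open>u, v, u \<times> v\<close> would factor \<open>q\<close> over \<open>\<int>\<close> as \<open>((u \<times> v) \<bullet> z) (L \<bullet> z)\<close>; both factors
  vanish at \<open>(1, \<xi>, \<eta>)\<close> only if they are zero, by the linear independence of \<open>1, \<xi>, \<eta>\<close>.\<close>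

lemma qform_not_vanishing_on_plane:
  fixes p :: "int qcoeffs" and u v :: "int vec3"
  assumes indep: "lin_indep_1 xi eta" and p: "p \<noteq> (0, 0, 0, 0, 0, 0)"
    and root: "qform (of_int6 p) (1, xi, eta) = 0"
    and uv: "cross_prod3 u v \<noteq> (0, 0, 0)"
  shows "qform p u \<noteq> 0 \<or> qform_polar p u v \<noteq> 0 \<or> qform p v \<noteq> 0"
proof (rule ccontr)
  assume "\<not> ?thesis"
  then have vanish: "qform p u = 0" "qform_polar p u v = 0" "qform p v = 0" by auto
  define n where "n = cross_prod3 u v"
  define N where "N = dot3 n n"
  define L where "L = add3 (add3 (scale3 (qform p n) n) (scale3 (qform_polar p u n) (cross_prod3 v n)))
    (scale3 (qform_polar p v n) (cross_prod3 n u))"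
  have factor: "(of_int N)\<^sup>2 * qform (of_int6 p) z = dot3 (of_int3 n) z * dot3 z (of_int3 L)" for z
  proof -
    let ?P = "of_int6 p" and ?u = "of_int3 u" and ?v = "of_int3 v" and ?n = "of_int3 n"
    have n: "?n = cross_prod3 ?u ?v" unfolding n_def by (simp add: of_int3_cross_prod3)
    have N: "of_int N = dot3 ?n ?n" unfolding N_def by (simp add: of_int_dot3)
    have "(of_int N)\<^sup>2 * qform ?P z = qform ?P (scale3 (of_int N) z)" by (simp add: qform_scale3)
    also have "scale3 (of_int N) z = add3 (add3 (scale3 (dot3 z (cross_prod3 ?v ?n)) ?u)
        (scale3 (dot3 z (cross_prod3 ?n ?u)) ?v)) (scale3 (dot3 ?n z) ?n)"
      unfolding N n by (rule scale3_dot3_cross_prod3_decomp)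
    also have "qform ?P \<dots> = (dot3 ?n z)\<^sup>2 * qform ?P ?n + dot3 z (cross_prod3 ?v ?n) * dot3 ?n z * qform_polar ?P ?u ?n
        + dot3 z (cross_prod3 ?n ?u) * dot3 ?n z * qform_polar ?P ?v ?n"
      unfolding qform_add3_scale3_3 using vanish
      by (simp add: of_int_qform[symmetric] of_int_qform_polar[symmetric])
    also have "\<dots> = dot3 ?n z * dot3 z (of_int3 L)"
      unfolding L_def of_int3_add3 of_int3_scale3 of_int3_cross_prod3 of_int_qform of_int_qform_polar
      by (cases z; cases ?n; cases ?u; cases ?v) (simp add: algebra_simps power2_eq_square)
    finally show ?thesis .
  qed
  have "n \<noteq> (0, 0, 0)" using uv unfolding n_def .
  then have "dot3 (of_int3 n) (1, xi, eta) \<noteq> 0" using lin_indep_1_dot3_eq_zero[OF indep] by blast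
  then have "dot3 (1, xi, eta) (of_int3 L) = 0" using factor[of "(1, xi, eta)"] root by simp
  then have "L = (0, 0, 0)"
    using lin_indep_1_dot3_eq_zero[OF indep] dot3_commute by metis
  moreover have "N \<noteq> 0" using dot3_self_pos[OF \<open>n \<noteq> (0, 0, 0)\<close>] unfolding N_def by simp
  ultimately have "qform (of_int6 p) z = 0" for z using factor[of z] by (cases z) simp
  then have "of_int6 p = (0, 0, 0, 0, 0, 0)" by (rule qform_eq_zero_imp_coeffs_zero)
  then show False using p by (cases p) simp
qed

section \<open>Integral points on the conic\<close>

lemma coprime_binary_root_le:
  fixes A B C a b :: int
  assumes eq: "A * a\<^sup>2 + B * a * b + C * b\<^sup>2 = 0" and cop: "coprime a b"
    and nz: "A \<noteq> 0 \<or> B \<noteq> 0 \<or> C \<noteq> 0"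
  shows "\<bar>a\<bar> \<le> \<bar>B\<bar> + \<bar>C\<bar>"
proof -
  have "C * b\<^sup>2 = a * - (A * a + B * b)" using eq by (simp add: algebra_simps power2_eq_square)
  then have "a dvd C * b\<^sup>2" by simp
  then have "a dvd C" using cop by (simp add: coprime_dvd_mult_left_iff)
  show ?thesis
  proof (cases "C = 0")
    case False
    then show ?thesis using dvd_imp_le_int[OF False \<open>a dvd C\<close>] by simp
  next
    case True
    show ?thesis
    proof (cases "a = 0")
      case False
      have "a * (A * a + B * b) = 0" using eq True by (simp add: algebra_simps power2_eq_square)
      then have Aa: "A * a = - (B * b)" using False by simp
      then have "B * b = a * - A" by (simp add: algebra_simps)
      then have "a dvd B * b" by simp
      then have "a dvd B" using cop by (simp add: coprime_dvd_mult_left_iff)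
      moreover have "B \<noteq> 0" using Aa False nz True by auto
      ultimately show ?thesis using dvd_imp_le_int[of B a] by simp
    qed simp
  qed
qed

text \<open>In a reduced basis \<open>u, v\<close> of the plane, the coordinates \<open>(a, b)\<close> of a primitive zero \<open>x\<close> of
  \<open>q\<close> are a coprime root of the non-zero binary form \<open>q(a u + b v)\<close>, so \<open>|a|\<close> and \<open>|b|\<close> are bounded
  by its coefficients. As \<open>u, v\<close> are integral this gives \<open>|x| = O(|u|\<^sup>2 |v|\<^sup>2)\<close>, and
  \<open>|u| |v| = O(|u \<times> v|)\<close> by reduction.\<close>

lemma conic_point_le_area:
  fixes p :: "int qcoeffs" and x w :: "int vec3"
  assumes indep: "lin_indep_1 xi eta" and p: "p \<noteq> (0, 0, 0, 0, 0, 0)"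
    and root: "qform (of_int6 p) (1, xi, eta) = 0"
    and xw: "cross_prod3 x w \<noteq> (0, 0, 0)" and on_conic: "qform p x = 0"
    and primitive: "\<And>g y. 2 \<le> g \<Longrightarrow> x \<noteq> scale3 g y"
  shows "\<bar>fst x\<bar> \<le> 8 * qheight p * area_sq x w"
proof -
  define N where "N = area_sq x w"
  obtain u v where span: "int_span2 x u v" and N: "area_sq u v = N"
    and reduced: "3 * (dot3 u u * dot3 v v) \<le> 4 * N"
    using reduced_basis[of x w] unfolding N_def by blast
  obtain a b where x: "x = add3 (scale3 a u) (scale3 b v)" using span int_span2_def by auto
  have "0 < N" using dot3_self_pos[OF xw] unfolding N_def .
  then have uv: "cross_prod3 u v \<noteq> (0, 0, 0)" using N by auto
  then have "u \<noteq> (0, 0, 0)" "v \<noteq> (0, 0, 0)" by (cases u; cases v; auto)+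
  have "x \<noteq> (0, 0, 0)" using xw by (cases w) auto
  have cop: "coprime a b"
  proof (rule ccontr)
    assume "\<not> coprime a b"
    moreover have "gcd a b \<noteq> 0" using \<open>x \<noteq> (0, 0, 0)\<close> x by (cases u; cases v) auto
    ultimately have g: "2 \<le> gcd a b"
      using gcd_ge_0_int[of a b] unfolding coprime_iff_gcd_eq_1 by linarith
    obtain a' b' where "a = gcd a b * a'" "b = gcd a b * b'" by (meson dvdE gcd_dvd1 gcd_dvd2)
    then have "x = scale3 (gcd a b) (add3 (scale3 a' u) (scale3 b' v))"
      using x by (cases u; cases v) (simp add: algebra_simps)
    then show False using primitive[OF g] by blast
  qed
  define A B C where "A = qform p u" and "B = qform_polar p u v" and "C = qform p v"
  have eq: "A * a\<^sup>2 + B * a * b + C * b\<^sup>2 = 0"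
    using on_conic unfolding x qform_add3_scale3 A_def B_def C_def by (simp add: algebra_simps)
  have nz: "A \<noteq> 0 \<or> B \<noteq> 0 \<or> C \<noteq> 0"
    using qform_not_vanishing_on_plane[OF indep p root uv] unfolding A_def B_def C_def .
  have a: "\<bar>a\<bar> \<le> \<bar>B\<bar> + \<bar>C\<bar>" using coprime_binary_root_le[OF eq cop nz] .
  have "C * b\<^sup>2 + B * b * a + A * a\<^sup>2 = 0" using eq by (simp add: algebra_simps)
  then have b: "\<bar>b\<bar> \<le> \<bar>B\<bar> + \<bar>A\<bar>"
    using coprime_binary_root_le[where A = C and C = A and a = b and b = a] cop nz by (auto simp: coprime_commute)
  define h k S where "h = supnorm3 u" and "k = supnorm3 v" and "S = qheight p"
  have hk: "1 \<le> h" "1 \<le> k" unfolding h_def k_def using supnorm3_ge_one \<open>u \<noteq> _\<close> \<open>v \<noteq> _\<close> by auto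
  have S: "0 \<le> S" unfolding S_def by (rule qheight_nonneg)
  have A: "\<bar>A\<bar> \<le> S * h\<^sup>2" and B: "\<bar>B\<bar> \<le> 2 * S * h * k" and C: "\<bar>C\<bar> \<le> S * k\<^sup>2"
    unfolding A_def B_def C_def S_def h_def k_def by (rule abs_qform_le abs_qform_polar_le)+
  have "\<bar>fst x\<bar> \<le> \<bar>a\<bar> * h + \<bar>b\<bar> * k"
  proof -
    have "\<bar>fst u\<bar> \<le> h" "\<bar>fst v\<bar> \<le> k" unfolding h_def k_def by (cases u; cases v; simp)+
    moreover have "fst x = a * fst u + b * fst v" using x by (cases u; cases v) simp
    ultimately have "\<bar>fst x\<bar> \<le> \<bar>a\<bar> * \<bar>fst u\<bar> + \<bar>b\<bar> * \<bar>fst v\<bar>"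
      by (simp add: abs_mult[symmetric] abs_triangle_ineq)
    also have "\<dots> \<le> \<bar>a\<bar> * h + \<bar>b\<bar> * k"
      using \<open>\<bar>fst u\<bar> \<le> h\<close> \<open>\<bar>fst v\<bar> \<le> k\<close> by (intro add_mono mult_left_mono) auto
    finally show ?thesis .
  qed
  also have "\<dots> \<le> (2 * S * h * k + S * k\<^sup>2) * h + (S * h\<^sup>2 + 2 * S * h * k) * k"
    using a b A B C hk by (intro add_mono mult_right_mono) auto
  also have "\<dots> = 3 * S * h * k * (h + k)" by (simp add: algebra_simps power2_eq_square)
  also have "\<dots> \<le> 3 * S * h * k * (2 * h * k)"
  proof -
    have "h \<le> h * k" "k \<le> h * k" using hk by (simp_all add: mult_le_cancel_left1 mult_le_cancel_right1)
    then have "h + k \<le> 2 * h * k" by simp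
    then show ?thesis using hk S by (intro mult_left_mono) auto
  qed
  also have "\<dots> = 6 * S * (h\<^sup>2 * k\<^sup>2)" by (simp add: algebra_simps power2_eq_square)
  also have "\<dots> \<le> 6 * S * (dot3 u u * dot3 v v)"
    using supnorm3_sq_le_dot3[of u] supnorm3_sq_le_dot3[of v] dot3_self_nonneg[of u] S unfolding h_def k_def
    by (intro mult_left_mono mult_mono) auto
  also have "\<dots> \<le> 8 * S * N"
  proof -
    have "2 * S * (3 * (dot3 u u * dot3 v v)) \<le> 2 * S * (4 * N)" using reduced S by (intro mult_left_mono) auto
    then show ?thesis by (simp add: algebra_simps)
  qed
  finally show ?thesis unfolding S_def N_def .
qed

section \<open>The function \<open>\<Delta>\<close> and its jumps\<close>

lemma delta3_nonneg: "0 \<le> delta3 xi eta x0 x1 x2"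
  unfolding delta3_def by simp

lemma delta3_round_le_half: "delta3 xi eta 1 (round xi) (round eta) \<le> 1/2"
  unfolding delta3_def using of_int_round_abs_le[of xi] of_int_round_abs_le[of eta]
  by (simp add: abs_minus_commute)

lemma Delta_le:
  assumes "1 \<le> x0" and "of_int x0 \<le> X"
  shows "Delta xi eta X \<le> delta3 xi eta x0 x1 x2"
  unfolding Delta_def using assms
  by (intro cInf_lower) (auto intro: bdd_belowI[of _ 0] simp: delta3_nonneg)

lemma Delta_le_half: "1 \<le> X \<Longrightarrow> Delta xi eta X \<le> 1/2"
  using Delta_le[of 1 X xi eta "round xi" "round eta"] delta3_round_le_half[of xi eta] by simp

text \<open>Only finitely many triples with \<open>x\<^sub>0 \<le> X\<close> have \<open>\<delta> \<le> 1\<close>, so the infimum is a minimum.\<close>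

lemma Delta_attained:
  assumes "1 \<le> X"
  obtains x0 x1 x2 where "1 \<le> x0" "of_int x0 \<le> X" "Delta xi eta X = delta3 xi eta x0 x1 x2"
proof -
  define n where "n = \<lfloor>X\<rfloor>"
  define R where "R = \<lceil>of_int n * (\<bar>xi\<bar> + \<bar>eta\<bar>)\<rceil> + 1"
  define box where "box = {1..n} \<times> {-R..R} \<times> {-R..R}"
  define T where "T = (\<lambda>(x0, x1, x2). delta3 xi eta x0 x1 x2) ` box"
  have n: "1 \<le> n" using assms unfolding n_def by (simp add: le_floor_iff)
  have R: "of_int n * \<bar>xi\<bar> + 1 \<le> of_int R" "of_int n * \<bar>eta\<bar> + 1 \<le> of_int R"
  proof -
    have "of_int n * \<bar>xi\<bar> + of_int n * \<bar>eta\<bar> \<le> of_int \<lceil>of_int n * (\<bar>xi\<bar> + \<bar>eta\<bar>)\<rceil>"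
      using le_of_int_ceiling[of "of_int n * (\<bar>xi\<bar> + \<bar>eta\<bar>)"] by (simp add: distrib_left)
    moreover have "0 \<le> of_int n * \<bar>xi\<bar>" "0 \<le> of_int n * \<bar>eta\<bar>" using n by simp_all
    ultimately show "of_int n * \<bar>xi\<bar> + 1 \<le> of_int R" "of_int n * \<bar>eta\<bar> + 1 \<le> of_int R"
      unfolding R_def of_int_add of_int_1 by linarith+
  qed
  have "finite T" unfolding T_def box_def by simp
  have round: "(1, round xi, round eta) \<in> box"
  proof -
    have "\<bar>xi\<bar> \<le> of_int n * \<bar>xi\<bar>" "\<bar>eta\<bar> \<le> of_int n * \<bar>eta\<bar>"
      using n by (simp_all add: mult_le_cancel_right1)
    then have "\<bar>of_int (round xi)\<bar> \<le> real_of_int R" "\<bar>of_int (round eta)\<bar> \<le> real_of_int R"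
      using R of_int_round_abs_le[of xi] of_int_round_abs_le[of eta] by linarith+
    then show ?thesis unfolding box_def using n by auto
  qed
  then have "T \<noteq> {}" unfolding T_def by auto
  then have "Min T \<in> T" using Min_in[OF \<open>finite T\<close>] by blast
  then obtain x0 x1 x2 where t: "(x0, x1, x2) \<in> box" "Min T = delta3 xi eta x0 x1 x2"
    unfolding T_def by auto
  have "Min T \<le> 1/2"
    using round Min_le[OF \<open>finite T\<close>] delta3_round_le_half[of xi eta] unfolding T_def by force
  have far: "1 < \<bar>a - of_int y\<bar>" if "\<bar>a\<bar> + 1 \<le> of_int R" "R < \<bar>y\<bar>" for a :: real and y
  proof -
    have "real_of_int (R + 1) \<le> of_int \<bar>y\<bar>" using that(2) by (simp only: of_int_le_iff)
    then show ?thesis using that(1) abs_triangle_ineq2[of "of_int y" a] by (simp add: abs_minus_commute)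
  qed
  have outside: "1 < delta3 xi eta y0 y1 y2" if "1 \<le> y0" "y0 \<le> n" "(y0, y1, y2) \<notin> box" for y0 y1 y2
  proof -
    have "\<bar>of_int y0 * xi\<bar> + 1 \<le> of_int R" "\<bar>of_int y0 * eta\<bar> + 1 \<le> of_int R"
      using that R mult_right_mono[of "of_int y0" "of_int n" "\<bar>xi\<bar>"]
        mult_right_mono[of "of_int y0" "of_int n" "\<bar>eta\<bar>"] by (simp_all add: abs_mult)
    moreover have "R < \<bar>y1\<bar> \<or> R < \<bar>y2\<bar>" using that unfolding box_def by auto
    ultimately show ?thesis using far unfolding delta3_def by (auto simp: less_max_iff_disj)
  qed
  have "Delta xi eta X = Min T"
    unfolding Delta_def
  proof (rule cInf_eq_minimum)
    show "Min T \<in> {delta3 xi eta x0 x1 x2 |x0 x1 x2. 1 \<le> x0 \<and> of_int x0 \<le> X}"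
      using t unfolding box_def n_def by (force simp: le_floor_iff)
  next
    fix d assume "d \<in> {delta3 xi eta x0 x1 x2 |x0 x1 x2. 1 \<le> x0 \<and> of_int x0 \<le> X}"
    then obtain y0 y1 y2 where y: "d = delta3 xi eta y0 y1 y2" "1 \<le> y0" "y0 \<le> n"
      unfolding n_def by (auto simp: le_floor_iff)
    show "Min T \<le> d"
    proof (cases "(y0, y1, y2) \<in> box")
      case True
      then show ?thesis using Min_le[OF \<open>finite T\<close>] y(1) unfolding T_def by force
    qed (use outside y \<open>Min T \<le> 1/2\<close> in force)
  qed
  then show ?thesis using that t unfolding box_def n_def by (force simp: le_floor_iff)
qed

lemma Delta_floor: "Delta xi eta X = Delta xi eta (of_int \<lfloor>X\<rfloor>)"
proof -
  have "of_int x0 \<le> X \<longleftrightarrow> of_int x0 \<le> (of_int \<lfloor>X\<rfloor> :: real)" for x0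
    by (metis floor_of_int le_floor_iff)
  then show ?thesis unfolding Delta_def by simp
qed

lemma Delta_antimono: "1 \<le> X \<Longrightarrow> X \<le> Y \<Longrightarrow> Delta xi eta Y \<le> Delta xi eta X"
  by (metis Delta_attained Delta_le order.trans)

lemma delta3_pos:
  assumes "lin_indep_1 xi eta" and "x0 \<noteq> 0"
  shows "0 < delta3 xi eta x0 x1 x2"
proof -
  have "of_int x0 * xi - of_int x1 \<noteq> 0"
    using lin_indep_1_dot3_eq_zero[OF assms(1), of "(- x1, x0, 0)"] assms(2) by (auto simp: algebra_simps)
  then show ?thesis unfolding delta3_def by (simp add: less_max_iff_disj)
qed

lemma Delta_pos: "lin_indep_1 xi eta \<Longrightarrow> 1 \<le> X \<Longrightarrow> 0 < Delta xi eta X"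
  by (metis Delta_attained delta3_pos not_one_le_zero)

lemma isCont_locally_const:
  assumes "0 < r" and "\<And>x. \<bar>x - a\<bar> < r \<Longrightarrow> f x = f a"
  shows "isCont (f :: real \<Rightarrow> real) a"
proof -
  have "eventually (\<lambda>x. f x = f a) (nhds a)"
    unfolding eventually_nhds_metric dist_real_def using assms by blast
  then show ?thesis using isCont_cong[of f "\<lambda>_. f a" a] by simp
qed

lemma Delta_eq_floor_cases:
  "of_int n \<le> X \<Longrightarrow> X < of_int n + 1 \<Longrightarrow> Delta xi eta X = Delta xi eta (of_int n)"
  using Delta_floor[of xi eta X] floor_eq_iff[of X n] by simp

lemma jump_in_Xset:
  assumes "2 \<le> n" and jump: "Delta xi eta (of_int n) < Delta xi eta (of_int (n - 1))"
  shows "of_int n \<in> Xset xi eta"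
proof -
  have "\<forall>\<^sub>F X in at_left (of_int n). X \<in> {of_int n - 1<..<(of_int n :: real)}"
    by (rule eventually_at_left_real) simp
  then have "\<forall>\<^sub>F X in at_left (of_int n). Delta xi eta X = Delta xi eta (of_int (n - 1))"
  proof (rule eventually_mono)
    fix X :: real assume "X \<in> {of_int n - 1<..<of_int n}"
    then show "Delta xi eta X = Delta xi eta (of_int (n - 1))" by (intro Delta_eq_floor_cases) auto
  qed
  then have left: "(Delta xi eta \<longlongrightarrow> Delta xi eta (of_int (n - 1))) (at_left (of_int n))"
    by (rule tendsto_eventually)
  have "\<not> isCont (Delta xi eta) (of_int n)"
  proof
    assume "isCont (Delta xi eta) (of_int n)"
    then have "(Delta xi eta \<longlongrightarrow> Delta xi eta (of_int n)) (at_left (of_int n))"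
      unfolding isCont_def filterlim_at_split by blast
    with left have "Delta xi eta (of_int n) = Delta xi eta (of_int (n - 1))"
      using tendsto_unique trivial_limit_at_left_real by blast
    with jump show False by simp
  qed
  then show ?thesis using \<open>2 \<le> n\<close> unfolding Xset_def by simp
qed

lemma Xset_elem:
  assumes "a \<in> Xset xi eta"
  obtains n :: int where "a = of_int n" "1 \<le> n"
    "n = 1 \<or> Delta xi eta (of_int n) < Delta xi eta (of_int (n - 1))"
proof (cases "a = 1")
  case False
  then have a: "1 < a" "\<not> isCont (Delta xi eta) a" using assms unfolding Xset_def by auto
  define n where "n = \<lfloor>a\<rfloor>"
  have n: "1 \<le> n" using a unfolding n_def by (simp add: le_floor_iff)
  have "a = of_int n"
  proof (rule ccontr)
    assume "a \<noteq> of_int n"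
    then have "of_int n < a" "a < of_int n + 1" unfolding n_def by linarith+
    then have "isCont (Delta xi eta) a"
      by (intro isCont_locally_const[of "min (a - of_int n) (of_int n + 1 - a)"])
        (auto intro!: Delta_eq_floor_cases[of n, THEN trans] Delta_eq_floor_cases[symmetric])
    then show False using a by simp
  qed
  moreover have "Delta xi eta (of_int n) < Delta xi eta (of_int (n - 1))"
  proof -
    have "2 \<le> n" using a \<open>a = of_int n\<close> by simp
    then have "Delta xi eta (of_int n) \<le> Delta xi eta (of_int (n - 1))" by (intro Delta_antimono) auto
    moreover have "Delta xi eta (of_int n) \<noteq> Delta xi eta (of_int (n - 1))"
    proof
      assume eq: "Delta xi eta (of_int n) = Delta xi eta (of_int (n - 1))"
      have const: "Delta xi eta X = Delta xi eta a" if "\<bar>X - a\<bar> < 1" for X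
      proof (cases "X < a")
        case True
        then have "Delta xi eta X = Delta xi eta (of_int (n - 1))"
          using that \<open>a = of_int n\<close> by (intro Delta_eq_floor_cases) auto
        then show ?thesis using eq \<open>a = of_int n\<close> by simp
      next
        case False
        then show ?thesis using that \<open>a = of_int n\<close> by (simp add: Delta_eq_floor_cases)
      qed
      have "isCont (Delta xi eta) a" using isCont_locally_const[of 1 a "Delta xi eta", OF zero_less_one const] .
      then show False using a by simp
    qed
    ultimately show ?thesis by simp
  qed
  ultimately show ?thesis using that n by blast
qed (use that in simp)

lemma Xset_consecutive:
  assumes a: "a \<in> Xset xi eta" and b: "b \<in> Xset xi eta" and "a < b"
    and gap: "\<forall>z \<in> Xset xi eta. \<not> (a < z \<and> z < b)"
  obtains m n :: int where "a = of_int m" "b = of_int n" "1 \<le> m" "m < n"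
    "m = 1 \<or> Delta xi eta (of_int m) < Delta xi eta (of_int (m - 1))"
    "Delta xi eta (of_int (n - 1)) = Delta xi eta (of_int m)"
proof -
  obtain m where m: "a = of_int m" "1 \<le> m" "m = 1 \<or> Delta xi eta (of_int m) < Delta xi eta (of_int (m - 1))"
    using Xset_elem[OF a] by blast
  obtain n where n: "b = of_int n" using Xset_elem[OF b] by blast
  have "m < n" using \<open>a < b\<close> m n by simp
  have unchanged: "Delta xi eta (of_int (j + 1)) = Delta xi eta (of_int j)" if "m \<le> j" "j + 1 < n" for j
  proof (rule ccontr)
    assume "Delta xi eta (of_int (j + 1)) \<noteq> Delta xi eta (of_int j)"
    moreover have "Delta xi eta (of_int (j + 1)) \<le> Delta xi eta (of_int j)"
      using that m by (intro Delta_antimono) auto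
    ultimately have "of_int (j + 1) \<in> Xset xi eta" using that m by (intro jump_in_Xset) auto
    then show False using gap that m n by auto
  qed
  have const: "j < n \<longrightarrow> Delta xi eta (of_int j) = Delta xi eta (of_int m)" if "m \<le> j" for j
    using that
  proof (induction j rule: int_ge_induct)
    case (step i)
    then show ?case using unchanged[of i] by auto
  qed simp
  have "Delta xi eta (of_int (n - 1)) = Delta xi eta (of_int m)" using const[of "n - 1"] \<open>m < n\<close> by simp
  with that m n \<open>m < n\<close> show ?thesis by blast
qed

section \<open>The integral quadratic form of \<open>f\<close>\<close>

lemma coeff_coeff_eq_0_of_total_degree:
  assumes "total_degree f < i + k"
  shows "coeff (coeff f i) k = 0"
proof (cases "coeff f i = 0")
  case False
  have "finite {i + degree (coeff f i) | i. coeff f i \<noteq> 0}"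
  proof (rule finite_subset)
    show "{i + degree (coeff f i) | i. coeff f i \<noteq> 0} \<subseteq> (\<lambda>i. i + degree (coeff f i)) ` {..degree f}"
      using le_degree by fastforce
  qed simp
  then have "i + degree (coeff f i) \<le> total_degree f"
    unfolding total_degree_def using False by (intro Max_ge) auto
  then show ?thesis using assms by (simp add: coeff_eq_0)
qed simp

lemma poly_eq_sum_atMost:
  "degree p \<le> n \<Longrightarrow> poly p x = (\<Sum>i\<le>n. coeff p i * x ^ i)" for p :: "'a::comm_semiring_1 poly"
  by (subst poly_as_sum_of_monoms'[symmetric]) (simp_all add: poly_sum poly_monom)

lemma eval2_total_degree_le_2:
  assumes "total_degree f \<le> 2"
  defines "r \<equiv> \<lambda>i k. of_rat (coeff (coeff f i) k) :: real"
  shows "eval2 f xi eta = r 0 0 + r 0 1 * xi + r 1 0 * eta + r 0 2 * xi * xi + r 1 1 * xi * eta + r 2 0 * eta * eta"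
proof -
  have r0: "r i k = 0" if "2 < i + k" for i k
    using coeff_coeff_eq_0_of_total_degree[of f i k] that assms(1) unfolding r_def by simp
  have "coeff f i = 0" if "2 < i" for i
    using coeff_coeff_eq_0_of_total_degree[of f i] that assms(1) by (simp add: poly_eq_iff)
  then have "degree f \<le> 2" by (intro degree_le) auto
  have inner: "poly (map_poly of_rat (coeff f i)) xi = (\<Sum>k\<le>2. r i k * xi ^ k)" for i
  proof -
    have "degree (map_poly (of_rat :: rat \<Rightarrow> real) (coeff f i)) \<le> 2"
      using coeff_coeff_eq_0_of_total_degree[of f i] assms(1) by (intro degree_le) (auto simp: coeff_map_poly)
    then show ?thesis by (simp add: poly_eq_sum_atMost coeff_map_poly r_def)
  qed
  let ?g = "\<lambda>c. poly (map_poly of_rat c) xi"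
  have "eval2 f xi eta = (\<Sum>i\<le>2. coeff (map_poly ?g f) i * eta ^ i)"
    unfolding eval2_def using \<open>degree f \<le> 2\<close> map_poly_degree_leq[of ?g f]
    by (intro poly_eq_sum_atMost) simp
  also have "\<dots> = (\<Sum>i\<le>2. poly (map_poly of_rat (coeff f i)) xi * eta ^ i)"
    by (simp add: coeff_map_poly)
  also have "\<dots> = (\<Sum>i\<le>2. (\<Sum>k\<le>2. r i k * xi ^ k) * eta ^ i)" by (simp add: inner)
  finally show ?thesis using r0[of 1 2] r0[of 2 1] r0[of 2 2]
    by (simp add: numeral_2_eq_2 algebra_simps)
qed

lemma common_denominator:
  fixes A :: "rat set"
  assumes "finite A"
  shows "\<exists>d::int. 0 < d \<and> (\<forall>r \<in> A. of_int d * r \<in> \<int>)"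
  using assms
proof (induction rule: finite_induct)
  case (insert r A)
  obtain d where d: "0 < d" "\<forall>s \<in> A. of_int d * s \<in> \<int>" using insert.IH by blast
  obtain a e where q: "quotient_of r = (a, e)" by fastforce
  have "0 < e" "of_int e * r \<in> \<int>"
    using quotient_of_denom_pos[OF q] quotient_of_div[OF q] by simp_all
  moreover have "of_int (e * d) * s \<in> \<int>" if "s \<in> insert r A" for s
  proof -
    have "of_int (e * d) * s = of_int d * (of_int e * s)" "of_int (e * d) * s = of_int e * (of_int d * s)"
      by simp_all
    then show ?thesis using that d(2) \<open>of_int e * r \<in> \<int>\<close> by (metis Ints_mult Ints_of_int insertE)
  qed
  ultimately show ?case using d(1) by (intro exI[of _ "e * d"]) auto
qed (intro exI[of _ 1], simp)

lemma int_qform_of_total_degree_2: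
  fixes f :: "rat poly poly"
  assumes deg: "total_degree f = 2" and "f \<noteq> 0"
  obtains p :: "int qcoeffs" and D :: real where "p \<noteq> (0, 0, 0, 0, 0, 0)" "0 < D"
    "\<And>xi eta. qform (of_int6 p) (1, xi, eta) = D * eval2 f xi eta"
proof -
  define r where "r i k = coeff (coeff f i) k" for i k
  define I :: "(nat \<times> nat) set" where "I = {(0, 0), (0, 1), (1, 0), (0, 2), (1, 1), (2, 0)}"
  obtain d :: int where d: "0 < d" "\<And>i k. (i, k) \<in> I \<Longrightarrow> of_int d * r i k \<in> \<int>"
    using common_denominator[of "(\<lambda>(i, k). r i k) ` I"] unfolding I_def by auto
  define c where "c i k = \<lfloor>of_int d * r i k\<rfloor>" for i k
  have c: "(of_int (c i k) :: real) = of_int d * of_rat (r i k)" if "(i, k) \<in> I" for i k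
  proof -
    have "of_int (c i k) = of_int d * r i k" using d(2)[OF that] unfolding c_def by (metis Ints_cases floor_of_int)
    then have "(of_rat (of_int (c i k)) :: real) = of_rat (of_int d * r i k)" by simp
    then show ?thesis by (simp add: of_rat_mult)
  qed
  define p where "p = (c 0 0, c 0 1, c 1 0, c 0 2, c 1 1, c 2 0)"
  have "qform (of_int6 p) (1, xi, eta) = of_int d * eval2 f xi eta" for xi eta
    using c unfolding p_def eval2_total_degree_le_2[OF eq_imp_le[OF deg]] r_def I_def
    by (simp add: algebra_simps)
  moreover have "p \<noteq> (0, 0, 0, 0, 0, 0)"
  proof
    assume "p = (0, 0, 0, 0, 0, 0)"
    then have "r i k = 0" if "(i, k) \<in> I" for i k
      using c[OF that] d(1) that unfolding p_def I_def by auto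
    moreover have "r i k = 0" if "(i, k) \<notin> I" for i k
      using that coeff_coeff_eq_0_of_total_degree[of f i k] deg unfolding r_def I_def
      by (cases "i + k \<le> 2") (auto simp: le_Suc_eq numeral_2_eq_2)
    ultimately have "f = 0" unfolding r_def by (metis leading_coeff_0_iff)
    then show False using \<open>f \<noteq> 0\<close> by simp
  qed
  ultimately show ?thesis using d(1) by (intro that[of p "of_int d"]) auto
qed

section \<open>Estimates at the jumps of \<open>\<Delta>\<close>\<close>

fun approx_err :: "real \<Rightarrow> real \<Rightarrow> int vec3 \<Rightarrow> real vec3" where
  "approx_err xi eta (x0, x1, x2) = (0, of_int x0 * xi - of_int x1, of_int x0 * eta - of_int x2)"

lemma supnorm3_approx_err: "supnorm3 (approx_err xi eta (x0, x1, x2)) = delta3 xi eta x0 x1 x2"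
  unfolding delta3_def by simp

lemma of_int3_eq_approx_err:
  "of_int3 (x0, x1, x2) = add3 (scale3 (of_int x0) (1, xi, eta)) (scale3 (- 1) (approx_err xi eta (x0, x1, x2)))"
  by simp

lemma delta3_scale3:
  "delta3 xi eta (g * y0) (g * y1) (g * y2) = \<bar>of_int g\<bar> * delta3 xi eta y0 y1 y2"
proof -
  have "of_int (g * y) * z - of_int (g * y') = of_int g * (of_int y * z - of_int y' :: real)" for y y' z
    by (simp add: algebra_simps)
  then show ?thesis unfolding delta3_def by (simp only: abs_mult max_mult_distrib_left abs_ge_zero if_True)
qed

lemma abs_qform_le_delta3:
  assumes root: "qform (of_int6 p) (1, xi, eta) = 0"
    and x0: "1 \<le> x0" and small: "delta3 xi eta x0 x1 x2 \<le> 1"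
  shows "\<bar>of_int (qform p (x0, x1, x2))\<bar>
    \<le> of_int (qheight p) * (2 * supnorm3 (1, xi, eta) + 1) * (of_int x0 * delta3 xi eta x0 x1 x2)"
proof -
  define e where "e = approx_err xi eta (x0, x1, x2)"
  define d S M where "d = delta3 xi eta x0 x1 x2" and "S = qheight (of_int6 p)" and "M = supnorm3 (1, xi, eta)"
  have "supnorm3 e = d" unfolding e_def d_def by (rule supnorm3_approx_err)
  have "0 \<le> d" "0 \<le> S" unfolding d_def S_def using delta3_nonneg qheight_nonneg[of "of_int6 p"] by auto
  have "of_int (qform p (x0, x1, x2)) = - (of_int x0 * qform_polar (of_int6 p) (1, xi, eta) e) + qform (of_int6 p) e"
    unfolding of_int_qform of_int3_eq_approx_err[of _ _ _ xi eta] qform_add3_scale3 root e_def by simp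
  moreover have "\<bar>of_int x0 * qform_polar (of_int6 p) (1, xi, eta) e\<bar> \<le> of_int x0 * (2 * S * M * d)"
    using abs_qform_polar_le[of "of_int6 p" "(1, xi, eta)" e] x0 \<open>supnorm3 e = d\<close>
    unfolding S_def M_def by (simp add: abs_mult mult_left_mono)
  moreover have "\<bar>qform (of_int6 p) e\<bar> \<le> S * (of_int x0 * d)"
  proof -
    have "d * d \<le> of_int x0 * d" using small x0 \<open>0 \<le> d\<close> unfolding d_def by (intro mult_right_mono) auto
    then have "S * (supnorm3 e)\<^sup>2 \<le> S * (of_int x0 * d)"
      using \<open>supnorm3 e = d\<close> \<open>0 \<le> S\<close> by (simp add: power2_eq_square mult_left_mono)
    then show ?thesis using abs_qform_le[of "of_int6 p" e] unfolding S_def by linarith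
  qed
  ultimately have "\<bar>of_int (qform p (x0, x1, x2))\<bar> \<le> of_int x0 * (2 * S * M * d) + S * (of_int x0 * d)"
    by linarith
  also have "\<dots> = S * (2 * M + 1) * (of_int x0 * d)" by (simp add: algebra_simps)
  finally show ?thesis unfolding S_def M_def d_def of_int_qheight .
qed

text \<open>Writing \<open>x = x\<^sub>0 \<omega> - e\<close> and \<open>w = w\<^sub>0 \<omega> - f\<close> with \<open>\<omega> = (1, \<xi>, \<eta>)\<close> gives
  \<open>x \<times> w = w\<^sub>0 (\<omega> \<times> e) - x\<^sub>0 (\<omega> \<times> f) + e \<times> f\<close>, in which every term is \<open>O(m \<delta>(w))\<close>.\<close>

lemma area_le_delta3:
  assumes x0: "0 \<le> x0" "of_int x0 \<le> m" and w0: "0 \<le> w0" "of_int w0 \<le> m" and "1 \<le> m"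
    and le: "delta3 xi eta x0 x1 x2 \<le> delta3 xi eta w0 w1 w2" and small: "delta3 xi eta w0 w1 w2 \<le> 1"
  shows "of_int (area_sq (x0, x1, x2) (w0, w1, w2))
    \<le> 108 * (supnorm3 (1, xi, eta) * m * delta3 xi eta w0 w1 w2)\<^sup>2"
proof -
  define \<omega> :: "real vec3" where "\<omega> = (1, xi, eta)"
  define e f where "e = approx_err xi eta (x0, x1, x2)" and "f = approx_err xi eta (w0, w1, w2)"
  define dx dw M where "dx = delta3 xi eta x0 x1 x2" and "dw = delta3 xi eta w0 w1 w2"
    and "M = supnorm3 \<omega>"
  have norms: "supnorm3 e = dx" "supnorm3 f = dw" "1 \<le> M"
    unfolding e_def f_def dx_def dw_def supnorm3_approx_err M_def \<omega>_def by simp_all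
  have "0 \<le> dx" unfolding dx_def by (rule delta3_nonneg)
  have cross: "cross_prod3 (of_int3 (x0, x1, x2)) (of_int3 (w0, w1, w2)) =
      add3 (add3 (scale3 (of_int w0) (cross_prod3 \<omega> e)) (scale3 (- of_int x0) (cross_prod3 \<omega> f)))
        (cross_prod3 e f)"
    unfolding \<omega>_def e_def f_def by (simp add: algebra_simps)
  have "supnorm3 (cross_prod3 (of_int3 (x0, x1, x2)) (of_int3 (w0, w1, w2)))
      \<le> of_int w0 * (2 * M * dx) + of_int x0 * (2 * M * dw) + 2 * dx * dw"
    unfolding cross using supnorm3_cross_prod3_le[of \<omega> e] supnorm3_cross_prod3_le[of \<omega> f] supnorm3_cross_prod3_le[of e f]
      supnorm3_add3_le supnorm3_scale3 norms w0 x0 unfolding M_def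
    by (smt (verit, best) mult_left_mono of_int_nonneg abs_of_nonneg abs_minus_cancel)
  also have "\<dots> \<le> m * (2 * M * dw) + m * (2 * M * dw) + m * (2 * M * dw)"
  proof -
    have "dx \<le> m * M"
      using le small mult_mono[OF \<open>1 \<le> m\<close> norms(3)] \<open>1 \<le> m\<close> unfolding dx_def dw_def by simp
    then have "2 * dw * dx \<le> 2 * dw * (m * M)"
      using le \<open>0 \<le> dx\<close> unfolding dx_def dw_def by (intro mult_left_mono) auto
    then have "2 * dx * dw \<le> m * (2 * M * dw)" by (simp add: algebra_simps)
    moreover have "of_int w0 * (2 * M * dx) \<le> m * (2 * M * dw)"
      using w0 le norms(3) \<open>0 \<le> dx\<close> unfolding dx_def dw_def by (intro mult_mono) auto
    moreover have "of_int x0 * (2 * M * dw) \<le> m * (2 * M * dw)"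
      using x0 norms(3) \<open>0 \<le> dx\<close> le unfolding dx_def dw_def by (intro mult_right_mono) auto
    ultimately show ?thesis by linarith
  qed
  finally have sup: "supnorm3 (cross_prod3 (of_int3 (x0, x1, x2)) (of_int3 (w0, w1, w2))) \<le> 6 * (M * m * dw)"
    by (simp add: algebra_simps)
  have "of_int (area_sq (x0, x1, x2) (w0, w1, w2))
      \<le> 3 * (supnorm3 (cross_prod3 (of_int3 (x0, x1, x2)) (of_int3 (w0, w1, w2))))\<^sup>2"
    unfolding of_int_dot3 of_int3_cross_prod3 by (rule dot3_le_supnorm3_sq)
  also have "\<dots> \<le> 3 * (6 * (M * m * dw))\<^sup>2"
    by (rule mult_left_mono, rule power_mono[OF sup supnorm3_nonneg], simp)
  finally show ?thesis unfolding M_def \<omega>_def dw_def by (simp add: power_mult_distrib)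
qed

lemma delta3_eq_of_cross_prod3_eq_0:
  assumes "cross_prod3 (x0, x1, x2) (w0, w1, w2) = (0, 0, 0)" and "0 \<le> x0" and "0 \<le> w0"
  shows "of_int x0 * delta3 xi eta w0 w1 w2 = of_int w0 * delta3 xi eta x0 x1 x2"
proof -
  have "x0 * w1 = x1 * w0" "x2 * w0 = x0 * w2" using assms(1) by simp_all
  then have "real_of_int x0 * of_int w1 = of_int x1 * of_int w0" "real_of_int x2 * of_int w0 = of_int x0 * of_int w2"
    by (metis of_int_mult)+
  then have "scale3 (of_int x0) (approx_err xi eta (w0, w1, w2)) = scale3 (of_int w0) (approx_err xi eta (x0, x1, x2))"
    by (simp add: algebra_simps)
  then show ?thesis using supnorm3_scale3 assms(2,3) by (metis abs_of_nonneg of_int_0_le_iff supnorm3_approx_err)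
qed

lemma Delta_le_powr_of_approx:
  assumes "0 < lam"
    and approx: "\<exists>X0. \<forall>X. X \<ge> 1 \<and> X \<ge> X0 \<longrightarrow>
        (\<exists>x0 x1 x2 :: int. (x0, x1, x2) \<noteq> (0, 0, 0) \<and> \<bar>of_int x0\<bar> \<le> X \<and>
            \<bar>of_int x0 * xi - of_int x1\<bar> \<le> X powr (- lam) \<and>
            \<bar>of_int x0 * eta - of_int x2\<bar> \<le> X powr (- lam))"
  obtains X0 where "\<And>X. 1 < X \<Longrightarrow> X0 \<le> X \<Longrightarrow> Delta xi eta X \<le> X powr (- lam)"
proof -
  obtain X0 where sol: "\<forall>X. X \<ge> 1 \<and> X \<ge> X0 \<longrightarrow>
        (\<exists>x0 x1 x2 :: int. (x0, x1, x2) \<noteq> (0, 0, 0) \<and> \<bar>of_int x0\<bar> \<le> X \<and>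
            \<bar>of_int x0 * xi - of_int x1\<bar> \<le> X powr (- lam) \<and>
            \<bar>of_int x0 * eta - of_int x2\<bar> \<le> X powr (- lam))"
    using approx by blast
  have "Delta xi eta X \<le> X powr (- lam)" if X: "1 < X" "X0 \<le> X" for X
  proof -
    have "X \<ge> 1 \<and> X \<ge> X0" using X by simp
    then obtain z0 z1 z2 :: int where z: "(z0, z1, z2) \<noteq> (0, 0, 0)" "\<bar>of_int z0\<bar> \<le> X"
      "\<bar>of_int z0 * xi - of_int z1\<bar> \<le> X powr (- lam)" "\<bar>of_int z0 * eta - of_int z2\<bar> \<le> X powr (- lam)"
      using sol by blast
    have "X powr (- lam) < 1" using X \<open>0 < lam\<close> by (intro powr_less_one) auto
    then have "z0 \<noteq> 0" using z by (auto simp: abs_less_iff)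
    have dz: "delta3 xi eta z0 z1 z2 \<le> X powr (- lam)" unfolding delta3_def using z by simp
    show ?thesis
    proof (cases "0 < z0")
      case True
      then show ?thesis using z(2) dz Delta_le[of z0 X xi eta z1 z2] by simp
    next
      case False
      then have "Delta xi eta X \<le> delta3 xi eta (- 1 * z0) (- 1 * z1) (- 1 * z2)"
        using \<open>z0 \<noteq> 0\<close> z(2) by (intro Delta_le) auto
      then show ?thesis using dz unfolding delta3_scale3 by simp
    qed
  qed
  then show thesis using that by blast
qed

lemma Delta_pred_le_powr:
  assumes "0 < lam" and UB: "\<And>X. 1 < X \<Longrightarrow> X0 \<le> X \<Longrightarrow> Delta xi eta X \<le> X powr (- lam)"
    and "3 \<le> n" and "X0 \<le> of_int n - 1"
  shows "of_int n powr lam * Delta xi eta (of_int (n - 1)) \<le> 2 powr lam"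
proof -
  have "Delta xi eta (of_int (n - 1)) \<le> (of_int n - 1) powr (- lam)" using UB assms(3,4) by simp
  also have "\<dots> \<le> (of_int n / 2) powr (- lam)" using assms(1,3) by (intro powr_mono2') auto
  also have "\<dots> = 2 powr lam / of_int n powr lam" by (simp add: powr_minus_divide powr_divide)
  finally show ?thesis using assms(3) by (simp add: field_simps)
qed

lemma jump_point_attained:
  assumes "2 \<le> m" and jump: "Delta xi eta (of_int m) < Delta xi eta (of_int (m - 1))"
  obtains x1 x2 where "Delta xi eta (of_int m) = delta3 xi eta m x1 x2"
proof -
  obtain x0 x1 x2 where x: "1 \<le> x0" "x0 \<le> m" "Delta xi eta (of_int m) = delta3 xi eta x0 x1 x2"
    using Delta_attained[of "of_int m" xi eta] assms(1) by auto
  have "x0 = m"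
  proof (rule ccontr)
    assume "x0 \<noteq> m"
    then have "Delta xi eta (of_int (m - 1)) \<le> delta3 xi eta x0 x1 x2" using x by (intro Delta_le) auto
    then show False using x(3) jump by simp
  qed
  then show thesis using that x(3) by blast
qed

lemma jump_point_primitive:
  assumes "2 \<le> m" and jump: "Delta xi eta (of_int m) < Delta xi eta (of_int (m - 1))"
    and x: "Delta xi eta (of_int m) = delta3 xi eta m x1 x2" and "2 \<le> g"
  shows "(m, x1, x2) \<noteq> scale3 g y"
proof
  assume "(m, x1, x2) = scale3 g y"
  then obtain y0 y1 y2 where y: "m = g * y0" "x1 = g * y1" "x2 = g * y2" by (cases y) auto
  then have "0 < g * y0" using assms(1) by simp
  then have "0 < y0" using assms(4) by (simp add: zero_less_mult_iff)
  moreover have "2 * y0 \<le> m" using y(1) \<open>2 \<le> g\<close> \<open>0 < y0\<close> by simp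
  ultimately have "Delta xi eta (of_int (m - 1)) \<le> delta3 xi eta y0 y1 y2" by (intro Delta_le) auto
  also have "\<dots> \<le> \<bar>of_int g\<bar> * delta3 xi eta y0 y1 y2"
    using \<open>2 \<le> g\<close> delta3_nonneg[of xi eta y0 y1 y2] by (simp add: mult_le_cancel_right1)
  also have "\<dots> = Delta xi eta (of_int m)" using x unfolding y delta3_scale3 by simp
  finally show False using jump by simp
qed

lemma le_powr_inverse_of_le_powr:
  fixes m K :: real
  assumes "1/2 < lam" and "0 < m" and le: "m \<le> K * m powr (2 - 2 * lam)"
  shows "m \<le> K powr (1 / (2 * lam - 1))"
proof -
  have "m powr (2 * lam - 1) = m / m powr (2 - 2 * lam)"
    using powr_diff[of m 1 "2 - 2 * lam"] \<open>0 < m\<close> by simp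
  also have "\<dots> \<le> K" using le \<open>0 < m\<close> by (simp add: divide_le_eq)
  finally have "m powr (2 * lam - 1) \<le> K" .
  then have "(m powr (2 * lam - 1)) powr (1 / (2 * lam - 1)) \<le> K powr (1 / (2 * lam - 1))"
    using assms(1) by (intro powr_mono2) auto
  then show ?thesis using assms(1,2) by (simp add: powr_powr)
qed

text \<open>The key step: a minimal point \<open>x\<close> at a jump \<open>m\<close> and the minimal point \<open>w\<close> at \<open>m - 1\<close> span a
  lattice plane of area \<open>O(m \<Delta>(m - 1)) = O(m\<^bsup>1 - \<lambda>\<^esup>)\<close>; if \<open>x\<close> lay on the conic this area
  would have to be at least of order \<open>m\<^sup>1\<^sup>/\<^sup>2\<close>, which fails for \<open>\<lambda> > 1/2\<close> and large \<open>m\<close>.\<close>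

lemma jump_point_on_conic_le:
  fixes p :: "int qcoeffs"
  assumes indep: "lin_indep_1 xi eta" and p: "p \<noteq> (0, 0, 0, 0, 0, 0)"
    and root: "qform (of_int6 p) (1, xi, eta) = 0"
    and "0 < lam" and UB: "\<And>X. 1 < X \<Longrightarrow> X0 \<le> X \<Longrightarrow> Delta xi eta X \<le> X powr (- lam)"
    and m: "3 \<le> m" "X0 \<le> of_int m - 1"
    and jump: "Delta xi eta (of_int m) < Delta xi eta (of_int (m - 1))"
    and x: "Delta xi eta (of_int m) = delta3 xi eta m x1 x2"
    and on_conic: "qform p (m, x1, x2) = 0"
  shows "of_int m \<le> 864 * of_int (qheight p) * (supnorm3 (1, xi, eta))\<^sup>2 * (2 powr lam)\<^sup>2
    * of_int m powr (2 - 2 * lam)"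
proof -
  obtain w0 w1 w2 where w: "1 \<le> w0" "of_int w0 \<le> (of_int (m - 1) :: real)"
      "Delta xi eta (of_int (m - 1)) = delta3 xi eta w0 w1 w2"
    by (rule Delta_attained[of "of_int (m - 1)" xi eta]) (use m(1) in auto)
  note w = w(1) w(2)[unfolded of_int_le_iff] w(3)
  define dw S M N where "dw = delta3 xi eta w0 w1 w2" and "S = real_of_int (qheight p)"
    and "M = supnorm3 (1, xi, eta)"
    and "N = area_sq (m, x1, x2) (w0, w1, w2)"
  have lt: "delta3 xi eta m x1 x2 < dw" using jump x w(3) unfolding dw_def by simp
  have "dw \<le> 1" using Delta_le_half[of "of_int (m - 1)" xi eta] m(1) w(3) unfolding dw_def by simp
  have "0 \<le> S" unfolding S_def by (simp add: qheight_nonneg)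
  have "cross_prod3 (m, x1, x2) (w0, w1, w2) \<noteq> (0, 0, 0)"
  proof
    assume "cross_prod3 (m, x1, x2) (w0, w1, w2) = (0, 0, 0)"
    then have "of_int m * dw = of_int w0 * delta3 xi eta m x1 x2"
      using m(1) w(1) unfolding dw_def by (intro delta3_eq_of_cross_prod3_eq_0) auto
    also have "\<dots> \<le> of_int m * delta3 xi eta m x1 x2"
      using w(2) delta3_nonneg[of xi eta m x1 x2] by (intro mult_right_mono) auto
    finally show False using lt m(1) by simp
  qed
  then have "\<bar>m\<bar> \<le> 8 * qheight p * N"
    using conic_point_le_area[OF indep p root _ on_conic] jump_point_primitive[OF _ jump x] m(1)
    unfolding N_def by fastforce
  then have "real_of_int m \<le> of_int (8 * qheight p * N)" using m(1) by (simp only: of_int_le_iff)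
  then have "of_int m \<le> 8 * S * of_int N" unfolding S_def by simp
  also have "\<dots> \<le> 8 * S * (108 * (M * of_int m * dw)\<^sup>2)"
    using area_le_delta3[of m "of_int m" w0 xi eta x1 x2 w1 w2] m(1) w(1,2) lt \<open>dw \<le> 1\<close> \<open>0 \<le> S\<close>
    unfolding N_def M_def dw_def by (intro mult_left_mono) auto
  also have "\<dots> = 864 * S * M\<^sup>2 * (of_int m powr (2 - 2 * lam) * (of_int m powr lam * dw)\<^sup>2)"
  proof -
    have "(of_int m powr lam)\<^sup>2 * of_int m powr (2 - 2 * lam) = (of_int m)\<^sup>2"
      using m(1) by (simp add: power2_eq_square powr_add[symmetric])
    then show ?thesis by (simp add: power_mult_distrib algebra_simps)
  qed
  also have "\<dots> \<le> 864 * S * M\<^sup>2 * (of_int m powr (2 - 2 * lam) * (2 powr lam)\<^sup>2)"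
    using Delta_pred_le_powr[OF \<open>0 < lam\<close> UB m] w(3) \<open>0 \<le> S\<close> delta3_nonneg[of xi eta w0 w1 w2]
    unfolding dw_def by (intro mult_left_mono power_mono) auto
  finally show ?thesis unfolding S_def M_def by (simp add: ac_simps)
qed

lemma Delta_jump_lower_bound_eventually:
  fixes p :: "int qcoeffs"
  assumes indep: "lin_indep_1 xi eta" and p: "p \<noteq> (0, 0, 0, 0, 0, 0)"
    and root: "qform (of_int6 p) (1, xi, eta) = 0"
    and lam: "1/2 < lam" and UB: "\<And>X. 1 < X \<Longrightarrow> X0 \<le> X \<Longrightarrow> Delta xi eta X \<le> X powr (- lam)"
  shows "\<exists>A > 1. \<forall>m. A \<le> real_of_int m \<and> Delta xi eta (of_int m) < Delta xi eta (of_int (m - 1)) \<longrightarrow>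
       1 \<le> of_int (qheight p) * (2 * supnorm3 (1, xi, eta) + 1) * (of_int m * Delta xi eta (of_int m))"
proof -
  define K where "K = 864 * of_int (qheight p) * (supnorm3 (1, xi, eta))\<^sup>2 * (2 powr lam)\<^sup>2"
  define A where "A = max (X0 + 1) (max 3 (K powr (1 / (2 * lam - 1)))) + 1"
  have "1 < A" unfolding A_def by simp
  moreover have "1 \<le> of_int (qheight p) * (2 * supnorm3 (1, xi, eta) + 1) * (of_int m * Delta xi eta (of_int m))"
    if m: "A \<le> of_int m" and jump: "Delta xi eta (of_int m) < Delta xi eta (of_int (m - 1))" for m
  proof -
    have m3: "3 \<le> m" "X0 \<le> of_int m - 1" using m unfolding A_def by linarith+
    obtain x1 x2 where x: "Delta xi eta (of_int m) = delta3 xi eta m x1 x2"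
      using jump_point_attained[of m xi eta] m3 jump by auto
    have "qform p (m, x1, x2) \<noteq> 0"
    proof
      assume "qform p (m, x1, x2) = 0"
      then have "of_int m \<le> K * of_int m powr (2 - 2 * lam)"
        using jump_point_on_conic_le[OF indep p root _ UB m3 jump x] lam unfolding K_def by simp
      then have "of_int m \<le> K powr (1 / (2 * lam - 1))"
        using m3 lam by (intro le_powr_inverse_of_le_powr) auto
      then show False using m unfolding A_def by linarith
    qed
    then have "1 \<le> \<bar>real_of_int (qform p (m, x1, x2))\<bar>" by linarith
    also have "\<dots> \<le> of_int (qheight p) * (2 * supnorm3 (1, xi, eta) + 1) * (of_int m * delta3 xi eta m x1 x2)"
      using abs_qform_le_delta3[OF root, of m x1 x2] m3 x Delta_le_half[of "of_int m" xi eta] by simp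
    finally show ?thesis unfolding x .
  qed
  ultimately show ?thesis by blast
qed

lemma Delta_jump_lower_bound:
  fixes p :: "int qcoeffs"
  assumes indep: "lin_indep_1 xi eta" and p: "p \<noteq> (0, 0, 0, 0, 0, 0)"
    and root: "qform (of_int6 p) (1, xi, eta) = 0"
    and lam: "1/2 < lam" and UB: "\<And>X. 1 < X \<Longrightarrow> X0 \<le> X \<Longrightarrow> Delta xi eta X \<le> X powr (- lam)"
  shows "\<exists>C > 0. \<forall>m. 1 \<le> m \<and> (m = 1 \<or> Delta xi eta (of_int m) < Delta xi eta (of_int (m - 1))) \<longrightarrow>
       1 \<le> C * of_int m * Delta xi eta (of_int m)"
proof -
  obtain A :: real where A: "1 < A"
    and large: "\<forall>m. A \<le> of_int m \<and> Delta xi eta (of_int m) < Delta xi eta (of_int (m - 1)) \<longrightarrow>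
       1 \<le> of_int (qheight p) * (2 * supnorm3 (1, xi, eta) + 1) * (of_int m * Delta xi eta (of_int m))"
    using Delta_jump_lower_bound_eventually[OF indep p root lam UB] by blast
  define d where "d = Delta xi eta A"
  define C where "C = max (of_int (qheight p) * (2 * supnorm3 (1, xi, eta) + 1)) (1 / d)"
  have "0 < d" unfolding d_def using Delta_pos[OF indep less_imp_le[OF A]] .
  then have "0 < C" unfolding C_def by (simp add: less_max_iff_disj)
  have "1 \<le> C * of_int m * Delta xi eta (of_int m)"
    if m: "1 \<le> m" and jump: "m = 1 \<or> Delta xi eta (of_int m) < Delta xi eta (of_int (m - 1))" for m
  proof (cases "of_int m < A")
    case True
    then have "d \<le> Delta xi eta (of_int m)" unfolding d_def using m by (intro Delta_antimono) auto
    then have "1 \<le> 1 / d * 1 * Delta xi eta (of_int m)" using \<open>0 < d\<close> by simp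
    also have "\<dots> \<le> C * of_int m * Delta xi eta (of_int m)"
      using m Delta_pos[OF indep, of "of_int m"] \<open>0 < C\<close> unfolding C_def
      by (intro mult_right_mono mult_mono) auto
    finally show ?thesis .
  next
    case False
    then have "m \<noteq> 1" using A by auto
    then have "1 \<le> of_int (qheight p) * (2 * supnorm3 (1, xi, eta) + 1) * (of_int m * Delta xi eta (of_int m))"
      using large False jump by simp
    also have "\<dots> \<le> C * (of_int m * Delta xi eta (of_int m))"
      using m Delta_pos[OF indep, of "of_int m"] unfolding C_def by (intro mult_right_mono) auto
    finally show ?thesis by (simp add: mult.assoc)
  qed
  with \<open>0 < C\<close> show ?thesis by blast
qed

lemma Xset_gap_bound:
  assumes lam: "0 < lam" and UB: "\<And>X. 1 < X \<Longrightarrow> X0 \<le> X \<Longrightarrow> Delta xi eta X \<le> X powr (- lam)"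
    and "0 < C" and lower: "\<forall>m. 1 \<le> m \<and>
      (m = 1 \<or> Delta xi eta (of_int m) < Delta xi eta (of_int (m - 1))) \<longrightarrow>
      1 \<le> C * of_int m * Delta xi eta (of_int m)"
  shows "\<exists>c > 0. \<forall>a \<in> Xset xi eta. \<forall>b \<in> Xset xi eta.
           a < b \<and> (\<forall>z \<in> Xset xi eta. \<not> (a < z \<and> z < b)) \<longrightarrow> b powr lam \<le> c * a"
proof -
  define B where "B = max X0 2 + 1"
  define c where "c = max (B powr lam) (2 powr lam * C)"
  have "0 < c" unfolding c_def using \<open>0 < C\<close> by (simp add: less_max_iff_disj)
  have "b powr lam \<le> c * a" if ab: "a \<in> Xset xi eta" "b \<in> Xset xi eta" "a < b"
    "\<forall>z \<in> Xset xi eta. \<not> (a < z \<and> z < b)" for a b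
  proof -
    obtain m n where mn: "a = of_int m" "b = of_int n" "1 \<le> m" "m < n"
      and jump: "m = 1 \<or> Delta xi eta (of_int m) < Delta xi eta (of_int (m - 1))"
      and flat: "Delta xi eta (of_int (n - 1)) = Delta xi eta (of_int m)"
      using Xset_consecutive[OF ab] by blast
    have "c \<le> c * a" using \<open>0 < c\<close> mn by simp
    show ?thesis
    proof (cases "of_int n \<le> B")
      case True
      then have "b powr lam \<le> B powr lam" using mn lam by (intro powr_mono2) auto
      then show ?thesis using \<open>c \<le> c * a\<close> unfolding c_def by linarith
    next
      case False
      then have "3 \<le> n" "X0 \<le> of_int n - 1" unfolding B_def by linarith+
      have "1 \<le> C * of_int m * Delta xi eta (of_int m)" using lower mn(3) jump by blast
      then have "b powr lam \<le> b powr lam * (C * of_int m * Delta xi eta (of_int m))"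
        using mult_left_mono[of 1 _ "b powr lam"] by simp
      also have "\<dots> = C * of_int m * (of_int n powr lam * Delta xi eta (of_int (n - 1)))"
        using flat mn(2) by simp
      also have "\<dots> \<le> C * of_int m * 2 powr lam"
        using Delta_pred_le_powr[of lam X0 xi eta n] lam UB \<open>3 \<le> n\<close> \<open>X0 \<le> _\<close> \<open>0 < C\<close> mn(3)
        by (intro mult_left_mono) auto
      also have "\<dots> = 2 powr lam * C * a" using mn(1) by simp
      also have "\<dots> \<le> c * a" unfolding c_def using mn(1,3) by (intro mult_right_mono) auto
      finally show ?thesis .
    qed
  qed
  then show ?thesis using \<open>0 < c\<close> by blast
qed

theorem lemma3p3:
  fixes xi eta lam :: real and f :: "rat poly poly"
  assumes indep: "lin_indep_1 xi eta"
    and irr: "irreducible f" and deg: "total_degree f = 2" and notx: "\<not> in_Qx f"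
    and root: "eval2 f xi eta = 0"
    and lam: "lam > 1/2"
    and approx: "\<exists>X0. \<forall>X. X \<ge> 1 \<and> X \<ge> X0 \<longrightarrow>
        (\<exists>x0 x1 x2 :: int. (x0, x1, x2) \<noteq> (0, 0, 0) \<and> \<bar>of_int x0\<bar> \<le> X \<and>
            \<bar>of_int x0 * xi - of_int x1\<bar> \<le> X powr (- lam) \<and>
            \<bar>of_int x0 * eta - of_int x2\<bar> \<le> X powr (- lam))"
  shows "\<exists>c > 0. \<forall>a \<in> Xset xi eta. \<forall>b \<in> Xset xi eta.
           a < b \<and> (\<forall>z \<in> Xset xi eta. \<not> (a < z \<and> z < b)) \<longrightarrow> b powr lam \<le> c * a"
proof -
  obtain X0 where UB: "\<And>X. 1 < X \<Longrightarrow> X0 \<le> X \<Longrightarrow> Delta xi eta X \<le> X powr (- lam)"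
    by (rule Delta_le_powr_of_approx[OF _ approx]) (use lam in auto)
  have "f \<noteq> 0" using irr by auto
  then obtain p D where p: "p \<noteq> (0, 0, 0, 0, 0, 0)" "0 < D"
      "\<And>u v. qform (of_int6 p) (1, u, v) = D * eval2 f u v"
    by (rule int_qform_of_total_degree_2[OF deg]) blast
  then have "qform (of_int6 p) (1, xi, eta) = 0" using root by simp
  then obtain C where "0 < C" and lower: "\<forall>m. 1 \<le> m \<and>
      (m = 1 \<or> Delta xi eta (of_int m) < Delta xi eta (of_int (m - 1))) \<longrightarrow>
      1 \<le> C * of_int m * Delta xi eta (of_int m)"
    using Delta_jump_lower_bound[OF indep p(1) _ lam UB] by blast
  show ?thesis by (rule Xset_gap_bound[OF _ UB \<open>0 < C\<close> lower]) (use lam in simp)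
qed

end
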